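(* Let $m$ be an even positive integer with prime factorization $m=\prod_{i=1}^{k}p_i^{b_i}$, and let $l(m)=\prod_{i=1}^{k}p_i^{\lfloor \log_{p_i} m\rfloor + b_i}$. Then for every integer $k'$, $$\binom{m+k'}{m}\equiv \binom{l(m)-1-k'}{m}\pmod{m}.$$
   Context: For any integer $a$ (possibly negative) and positive integer $m$, the binomial symbol is defined by $\binom{a}{m}=\frac{\prod_{i=0}^{m-1}(a-i)}{m!}$, which is an integer. $\lfloor x\rfloor$ denotes the greatest integer not exceeding $x$. *)

theory Defs
  imports "HOL-Computational_Algebra.Primes" "HOL-Number_Theory.Cong" Complex_Main
begin

text \<open>Binomial symbol for an arbitrary integer top: (prod_{i<m} (a - i)) / m!,
  which is an integer (the division is exact).\<close>
definition int_binom :: "int \<Rightarrow> nat \<Rightarrow> int" where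
  "int_binom a m = (\<Prod>i<m. a - int i) div fact m"

definition lfun :: "nat \<Rightarrow> nat" where
  "lfun m = (\<Prod>p\<in>prime_factors m.
      p ^ (nat \<lfloor>log (real p) (real m)\<rfloor> + multiplicity p m))"

end

theory Submission
  imports Defs "HOL-Computational_Algebra.Formal_Power_Series"
begin

text \<open>
  For a prime \<open>p\<close> dividing \<open>m\<close>, \<open>l(m)\<close> contains \<open>p\<close> to the power \<open>v\<^sub>p(m)\<close> plus the exponent
  of the largest power of \<open>p\<close> not exceeding \<open>m\<close>. Hence for \<open>0 < j \<le> m\<close> the identity
  \<open>j \<cdot> C(l, j) = l \<cdot> C(l - 1, j - 1)\<close> leaves enough factors \<open>p\<close> in \<open>C(l, j)\<close>, i.e.
  \<open>m\<close> divides \<open>C(l, j)\<close>. By Vandermonde's identity \<open>C(x + l, j) \<equiv> C(x, j)\<close> modulo \<open>m\<close> for all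
  \<open>j \<le> m\<close>, and the reflection \<open>C(a, m) = (-1)\<^sup>m C(m - a - 1, m)\<close> with \<open>m\<close> even turns
  \<open>C(l - 1 - k, m)\<close> into \<open>C((m + k) - l, m)\<close>.
\<close>

text \<open>\<open>int_binom\<close> coincides with \<open>gchoose\<close> on \<open>int\<close>; the integer facts are restated for it
  because the input syntax of \<open>gchoose\<close> is constrained to fields.\<close>

lemma of_int_int_binom: "of_int (int_binom a k) = (of_int a :: 'a::field_char_0) gchoose k"
  using of_int_gbinomial[of a k] unfolding int_binom_def gbinomial_prod_rev atLeast0LessThan .

lemma int_binom_0 [simp]: "int_binom a 0 = 1"
  by (simp add: int_binom_def)

lemma int_binom_of_nat: "int_binom (int n) k = int (n choose k)"
  using int_binomial[of n k] unfolding int_binom_def gbinomial_prod_rev atLeast0LessThan ..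

lemma int_binom_negated_upper: "int_binom a k = (-1) ^ k * int_binom (int k - a - 1) k"
  using gbinomial_int_negated_upper[of a k]
  unfolding int_binom_def gbinomial_prod_rev atLeast0LessThan .

lemma int_binom_Vandermonde:
  "(\<Sum>i=0..n. int_binom a i * int_binom b (n - i)) = int_binom (a + b) n"
proof -
  have "(of_int (\<Sum>i=0..n. int_binom a i * int_binom b (n - i)) :: rat)
      = of_int (int_binom (a + b) n)"
    by (simp add: of_int_int_binom gbinomial_Vandermonde)
  then show ?thesis
    by (simp only: of_int_eq_iff)
qed

lemma multiplicity_le_floor_log:
  fixes p j m :: nat
  assumes "prime p" "0 < j" "j \<le> m"
  shows "multiplicity p j \<le> nat \<lfloor>log (real p) (real m)\<rfloor>"
proof -
  let ?t = "multiplicity p j"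
  have "p ^ ?t \<le> m"
    using assms multiplicity_dvd[of p j] dvd_imp_le[of "p ^ ?t" j] by linarith
  moreover have p_gt_1: "1 < real p"
    using prime_gt_1_nat[OF assms(1)] by simp
  ultimately have "log (real p) (real (p ^ ?t)) \<le> log (real p) (real m)"
    using assms by (subst log_le_cancel_iff) auto
  then have "real ?t \<le> log (real p) (real m)"
    using p_gt_1 by (simp add: log_nat_power)
  then show ?thesis
    by (simp add: le_nat_iff le_floor_iff)
qed

lemma dvd_lfun_choose:
  fixes m j :: nat
  assumes "0 < j" "j \<le> m"
  shows "m dvd (lfun m choose j)"
proof (cases "lfun m choose j = 0")
  case False
  let ?L = "lfun m" and ?C = "lfun m choose j"
  have factor: "j * ?C = ?L * ((?L - 1) choose (j - 1))"
    using assms(1) times_binomial_minus1_eq by blast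
  show ?thesis
  proof (rule multiplicity_le_imp_dvd)
    fix p :: nat
    assume p: "prime p"
    show "multiplicity p m \<le> multiplicity p ?C"
    proof (cases "p \<in> prime_factors m")
      case True
      define e where "e = nat \<lfloor>log (real p) (real m)\<rfloor> + multiplicity p m"
      have "p ^ e dvd ?L"
        unfolding lfun_def e_def using True by (intro dvd_prodI) auto
      then have "p ^ e dvd j * ?C"
        unfolding factor by simp
      then have "e \<le> multiplicity p (j * ?C)"
        using False assms p by (intro multiplicity_geI) auto
      also have "\<dots> = multiplicity p j + multiplicity p ?C"
        using False assms p by (intro prime_elem_multiplicity_mult_distrib) auto
      finally show ?thesis
        using multiplicity_le_floor_log[OF p assms] unfolding e_def by linarith
    next
      case False
      then show ?thesis
        using p assms by (simp add: not_dvd_imp_multiplicity_0 prime_factors_dvd)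
    qed
  qed (use assms in simp)
qed (metis dvd_0_right)

lemma int_binom_shift_cong:
  fixes x :: int and L d r j :: nat
  assumes dvd_choose: "\<And>i. 0 < i \<Longrightarrow> i \<le> r \<Longrightarrow> d dvd (L choose i)" and "j \<le> r"
  shows "[int_binom (x + int L) j = int_binom x j] (mod int d)"
proof -
  have "int_binom (x + int L) j = (\<Sum>i=0..j. int_binom (int L) i * int_binom x (j - i))"
    by (simp add: int_binom_Vandermonde add.commute)
  also have "\<dots> = int_binom x j + (\<Sum>i=1..j. int (L choose i) * int_binom x (j - i))"
    by (simp add: sum.atLeast_Suc_atMost int_binom_of_nat)
  finally have split: "int_binom (x + int L) j
      = int_binom x j + (\<Sum>i=1..j. int (L choose i) * int_binom x (j - i))" .
  have "int d dvd (\<Sum>i=1..j. int (L choose i) * int_binom x (j - i))"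
    using dvd_choose \<open>j \<le> r\<close> by (intro dvd_sum dvd_mult2) auto
  then show ?thesis
    unfolding split cong_iff_dvd_diff by simp
qed

theorem lemma2p2:
  fixes m :: nat and k :: int
  assumes "even m" and "m > 0"
  shows "[int_binom (int m + k) m = int_binom (int (lfun m) - 1 - k) m] (mod int m)"
proof -
  define x where "x = int m + k - int (lfun m)"
  have reflect: "int_binom (int (lfun m) - 1 - k) m = int_binom x m"
    using int_binom_negated_upper[of "int (lfun m) - 1 - k" m] \<open>even m\<close>
    by (simp add: x_def algebra_simps)
  have "[int_binom (x + int (lfun m)) m = int_binom x m] (mod int m)"
    using dvd_lfun_choose[of _ m] by (intro int_binom_shift_cong[where r = m]) auto
  then show ?thesis
    by (simp add: reflect x_def)
qed

end
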